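(* For integers $N\ge2$ and $k\ge1$, let $E_k(2^N)$ (resp. $I_k(2^N)$) be the number of integers $0\le u<2^N$ such that $\sum_{i\ge0}\varepsilon_i(u)\varepsilon_{i+1}(u)\cdots\varepsilon_{i+k}(u)$ is even (resp. odd). Then for every real $A>1$, as $N\to\infty$, uniformly for integers $k\ge A\log N/\log2$, $$\frac{E_k(2^N)}{2^N}\ge1-2N^{1-A}+o(N^{1-A})\qquad\text{and}\qquad\frac{I_k(2^N)}{2^N}\le2N^{1-A}+o(N^{1-A}).$$
   Context: $\varepsilon_i(u)$ denotes the $i$-th binary digit of $u$ ($\varepsilon_0$ the units digit); the sum $\sum_i\varepsilon_i(u)\cdots\varepsilon_{i+k}(u)$ counts the (possibly overlapping) occurrences of $k+1$ consecutive digits $1$ in the binary expansion of $u$. *)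

theory Defs
  imports Complex_Main "HOL-Library.Landau_Symbols"
begin

definition bindigit :: "nat \<Rightarrow> nat \<Rightarrow> nat" where
  "bindigit i u = (u div 2 ^ i) mod 2"

(* sum over i >= 0 of eps_i(u) eps_{i+1}(u) ... eps_{i+k}(u);
   all terms with i > u vanish since u < 2^i, so the sum is over i \<le> u *)
definition runsum :: "nat \<Rightarrow> nat \<Rightarrow> nat" where
  "runsum k u = (\<Sum>i\<le>u. \<Prod>j\<le>k. bindigit (i + j) u)"

definition E_count :: "nat \<Rightarrow> nat \<Rightarrow> nat" where
  "E_count k N = card {u. u < 2 ^ N \<and> even (runsum k u)}"

definition I_count :: "nat \<Rightarrow> nat \<Rightarrow> nat" where
  "I_count k N = card {u. u < 2 ^ N \<and> odd (runsum k u)}"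

end

theory Submission
  imports Defs
begin

text \<open>If the run sum of \<open>u < 2^N\<close> is odd it is nonzero, so \<open>u\<close> contains a block of
  \<open>k + 1\<close> consecutive ones, starting at one of at most \<open>N\<close> positions. For each position
  only \<open>2^(N-k-1)\<close> integers below \<open>2^N\<close> have that block, so the union bound gives
  \<open>I_k(2^N) \<le> N 2^(N-k-1)\<close>. Since \<open>2^k \<ge> N^A\<close>, the density of \<open>I_k\<close> is at most
  \<open>N^(1-A)\<close>, so the claimed estimates hold even with error term \<open>0\<close>.\<close>

lemma bindigit_eq_1_iff: "bindigit i u = 1 \<longleftrightarrow> bit u i"
  by (simp add: bindigit_def bit_iff_odd odd_iff_mod_2_eq_one)

lemma bit_imp_less_if_less_power2:
  fixes u :: nat
  assumes "u < 2 ^ N" "bit u n"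
  shows "n < N"
  using assms by (metis bit_take_bit_iff take_bit_nat_eq_self_iff)

lemma block_eq_mask_if_bits:
  fixes u :: nat
  assumes "\<And>j. j < m \<Longrightarrow> bit u (i + j)"
  shows "(u div 2 ^ i) mod 2 ^ m = 2 ^ m - 1"
proof -
  have "take_bit m (drop_bit i u) = mask m"
    by (rule bit_eqI) (auto simp: bit_simps assms)
  then show ?thesis by (simp add: take_bit_eq_mod drop_bit_eq_div mask_eq_exp_minus_1)
qed

lemma run_of_ones_if_odd_runsum:
  assumes "odd (runsum k u)"
  obtains i where "\<And>j. j \<le> k \<Longrightarrow> bit u (i + j)"
proof -
  from assms obtain i where "(\<Prod>j\<le>k. bindigit (i + j) u) \<noteq> 0"
    unfolding runsum_def by (metis (no_types, lifting) even_zero sum.neutral)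
  then have "bindigit (i + j) u = 1" if "j \<le> k" for j
    using that by (simp add: bindigit_def)
  then show ?thesis using that by (metis One_nat_def bindigit_eq_1_iff)
qed

lemma card_fixed_block_le:
  assumes "i + m \<le> N"
  shows "card {u::nat. u < 2 ^ N \<and> (u div 2 ^ i) mod 2 ^ m = c} * 2 ^ m \<le> 2 ^ N"
proof -
  define S where "S = {u::nat. u < 2 ^ N \<and> (u div 2 ^ i) mod 2 ^ m = c}"
  define f where "f = (\<lambda>(a, b). a + 2 ^ i * (c + 2 ^ m * b) :: nat)"
  have cover: "S \<subseteq> f ` ({..<2 ^ i} \<times> {..<2 ^ (N - i - m)})"
  proof
    fix u assume "u \<in> S"
    then have u: "u < 2 ^ N" "(u div 2 ^ i) mod 2 ^ m = c" by (auto simp: S_def)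
    have "u = f (u mod 2 ^ i, u div 2 ^ i div 2 ^ m)"
      using u(2) mod_mult_div_eq[of "u div 2 ^ i" "2 ^ m"] mod_mult_div_eq[of u "2 ^ i"]
      by (simp add: f_def)
    moreover have "u div 2 ^ i div 2 ^ m < 2 ^ (N - i - m)"
    proof -
      have "(2::nat) ^ N = 2 ^ (i + m) * 2 ^ (N - i - m)"
        using assms by (simp flip: power_add)
      with u(1) have "u div 2 ^ (i + m) < 2 ^ (N - i - m)"
        by (simp add: div_less_iff_less_mult mult.commute)
      then show ?thesis by (simp add: div_mult2_eq power_add)
    qed
    ultimately show "u \<in> f ` ({..<2 ^ i} \<times> {..<2 ^ (N - i - m)})" by auto
  qed
  have "card S \<le> card ({..<2 ^ i :: nat} \<times> {..<2 ^ (N - i - m) :: nat})"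
    by (rule order.trans[OF card_mono[OF _ cover] card_image_le]) auto
  then have "card S \<le> 2 ^ i * 2 ^ (N - i - m)"
    by (simp add: card_cartesian_product)
  then have "card S * 2 ^ m \<le> 2 ^ (i + (N - i - m) + m)"
    by (simp add: power_add)
  with assms show ?thesis by (simp add: S_def)
qed

lemma I_count_mult_power2_le: "I_count k N * 2 ^ Suc k \<le> N * 2 ^ N"
proof -
  define T where "T i = {u::nat. u < 2 ^ N \<and> (u div 2 ^ i) mod 2 ^ Suc k = 2 ^ Suc k - 1}" for i
  have cover: "{u. u < 2 ^ N \<and> odd (runsum k u)} \<subseteq> (\<Union>i<N - k. T i)"
  proof
    fix u assume "u \<in> {u. u < 2 ^ N \<and> odd (runsum k u)}"
    then have u: "u < 2 ^ N" "odd (runsum k u)" by auto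
    obtain i where run: "\<And>j. j \<le> k \<Longrightarrow> bit u (i + j)"
      using run_of_ones_if_odd_runsum[OF u(2)] by blast
    have "i + k < N" using bit_imp_less_if_less_power2[OF u(1) run[of k]] by simp
    moreover have "u \<in> T i"
      using u(1) block_eq_mask_if_bits[of "Suc k" u i] run by (simp add: T_def less_Suc_eq_le)
    ultimately show "u \<in> (\<Union>i<N - k. T i)" by auto
  qed
  have "I_count k N \<le> (\<Sum>i<N - k. card (T i))"
    unfolding I_count_def
    by (rule order.trans[OF card_mono[OF _ cover] card_UN_le]) (auto simp: T_def)
  then have "I_count k N * 2 ^ Suc k \<le> (\<Sum>i<N - k. card (T i) * 2 ^ Suc k)"
    by (simp only: sum_distrib_right[symmetric] mult_le_mono1)
  also have "\<dots> \<le> (\<Sum>i<N - k. 2 ^ N)"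
    unfolding T_def by (rule sum_mono, rule card_fixed_block_le) simp
  also have "\<dots> \<le> N * 2 ^ N" by simp
  finally show ?thesis .
qed

lemma E_count_plus_I_count: "E_count k N + I_count k N = 2 ^ N"
proof -
  have "{u. u < 2 ^ N \<and> even (runsum k u)} \<union> {u. u < 2 ^ N \<and> odd (runsum k u)} = {..<2 ^ N}"
    by auto
  then show ?thesis
    unfolding E_count_def I_count_def by (metis (no_types, lifting) card_Un_disjoint card_lessThan
      disjoint_iff finite_Un finite_lessThan mem_Collect_eq)
qed

lemma powr_le_power2_if_ge_log:
  assumes "N > 0" "real k \<ge> A * ln (real N) / ln 2"
  shows "real N powr A \<le> 2 ^ k"
proof -
  have "A * ln (real N) \<le> real k * ln 2" using assms(2) by (simp add: divide_le_eq)
  then have "exp (A * ln (real N)) \<le> exp (real k * ln 2)" by simp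
  with assms(1) show ?thesis by (simp add: powr_def exp_of_nat_mult mult.commute)
qed

lemma I_count_ratio_le_powr:
  assumes "N > 0" "real k \<ge> A * ln (real N) / ln 2"
  shows "real (I_count k N) / 2 ^ N \<le> real N powr (1 - A)"
proof -
  have "real (I_count k N) * 2 ^ Suc k \<le> real N * 2 ^ N"
    using I_count_mult_power2_le[of k N, THEN of_nat_mono[where 'a=real]] by simp
  then have "real (I_count k N) / 2 ^ N \<le> real N / 2 ^ Suc k"
    by (simp add: field_simps)
  also have "\<dots> \<le> real N / 2 ^ k" by (simp add: divide_left_mono)
  also have "\<dots> \<le> real N / real N powr A"
    using assms by (intro divide_left_mono powr_le_power2_if_ge_log) auto
  also have "\<dots> = real N powr (1 - A)" using assms(1) by (simp add: powr_diff)
  finally show ?thesis .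
qed

theorem mainTheorem14:
  fixes A :: real
  assumes "A > 1"
  shows "\<exists>g :: nat \<Rightarrow> real. g \<in> o(\<lambda>N. real N powr (1 - A)) \<and>
    (\<forall>N k. N \<ge> 2 \<longrightarrow> k \<ge> 1 \<longrightarrow> real k \<ge> A * ln (real N) / ln 2 \<longrightarrow>
       real (E_count k N) / 2 ^ N \<ge> 1 - 2 * real N powr (1 - A) - g N \<and>
       real (I_count k N) / 2 ^ N \<le> 2 * real N powr (1 - A) + g N)"
proof (intro exI[of _ "\<lambda>_. 0"] conjI allI impI)
  show "(\<lambda>_. 0::real) \<in> o(\<lambda>N. real N powr (1 - A))" by simp
  fix N k :: nat
  assume "N \<ge> 2" "k \<ge> 1" "real k \<ge> A * ln (real N) / ln 2"
  then have I: "real (I_count k N) / 2 ^ N \<le> real N powr (1 - A)"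
    by (intro I_count_ratio_le_powr) auto
  have "real (E_count k N) + real (I_count k N) = 2 ^ N"
    using arg_cong[OF E_count_plus_I_count[of k N], of real] by simp
  then have "real (E_count k N) / 2 ^ N = 1 - real (I_count k N) / 2 ^ N"
    by (simp add: field_simps)
  with I show "real (E_count k N) / 2 ^ N \<ge> 1 - 2 * real N powr (1 - A) - 0"
    and "real (I_count k N) / 2 ^ N \<le> 2 * real N powr (1 - A) + 0"
    using powr_ge_zero[of "real N" "1 - A"] by linarith+
qed

end
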